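(* Let $m$ and $n$ be positive integers with $n$ composite, and suppose that (i) $n$ is squarefree, and (ii) for every prime divisor $p$ of $n$ and every integer $r$ with $1\le r\le m$ there is an integer $i\ge 0$ such that $n\equiv p^i \pmod{p^r-1}$. Then for every integer $r$ with $1\le r\le m$ we have $\binom{n}{r}\equiv 0 \pmod n$. *)

theory Defs
  imports "HOL-Computational_Algebra.Computational_Algebra" "HOL-Number_Theory.Number_Theory"
begin

end

theory Submission
  imports Defs
begin

text \<open>
  Every prime factor \<open>q\<close> of \<open>n\<close> exceeds \<open>m\<close>: otherwise take a second prime factor \<open>p\<close>
  (one exists since \<open>n\<close> is squarefree and composite) and apply the hypothesis with
  \<open>r = q - 1\<close>. By Fermat, \<open>q\<close> divides \<open>p ^ (q - 1) - 1\<close>, so \<open>0 = n = p ^ i\<close> modulo \<open>q\<close>,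
  which is absurd. Hence for \<open>1 \<le> r \<le> m\<close> no prime factor \<open>q\<close> of \<open>n\<close> divides \<open>r\<close>, and the
  identity \<open>r * (n choose r) = n * (n - 1 choose r - 1)\<close> gives \<open>q dvd (n choose r)\<close>.
  Since \<open>n\<close> is squarefree, it divides \<open>n choose r\<close>.
\<close>

lemma squarefree_dvd_if_prime_factors_dvd:
  fixes n x :: "'a :: factorial_semiring"
  assumes "squarefree n" and "\<And>p. prime p \<Longrightarrow> p dvd n \<Longrightarrow> p dvd x"
  shows "n dvd x"
proof (cases "x = 0")
  case False
  have "n \<noteq> 0" using assms(1) by auto
  have "multiplicity p n \<le> multiplicity p x" if p: "prime p" for p
  proof (cases "p dvd n")
    case True
    have "multiplicity p n \<le> 1"
      using assms(1) \<open>n \<noteq> 0\<close> p squarefree_factorial_semiring'' by blast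
    moreover have "1 \<le> multiplicity p x"
      using assms(2)[OF p True] False p by (intro multiplicity_geI) auto
    ultimately show ?thesis by linarith
  next
    case False
    then show ?thesis by (simp add: not_dvd_imp_multiplicity_0)
  qed
  then show ?thesis using \<open>n \<noteq> 0\<close> False prime_multiplicity_le_imp_dvd by blast
qed simp

lemma prime_dvd_choose_if_not_dvd:
  fixes q n r :: nat
  assumes "prime q" and "q dvd n" and "\<not> q dvd r"
  shows "q dvd (n choose r)"
proof -
  have "r > 0" using assms(3) by (cases r) simp_all
  then have "r * (n choose r) = n * ((n - 1) choose (r - 1))"
    by (rule times_binomial_minus1_eq)
  then have "q dvd r * (n choose r)" using assms(2) by simp
  then show ?thesis using assms(1,3) prime_dvd_mult_nat by blast
qed

lemma squarefree_composite_other_prime_factor: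
  fixes n q :: nat
  assumes "squarefree n" and "n > 1" and "\<not> prime n" and "prime q" and "q dvd n"
  obtains p where "prime p" and "p dvd n" and "p \<noteq> q"
proof -
  obtain k where k: "n = q * k" using assms(5) by blast
  have "k \<noteq> 1" using k assms(3,4) by auto
  moreover have "k \<noteq> 0" using k assms(2) by (metis mult_0_right not_one_less_zero)
  ultimately obtain p where p: "prime p" "p dvd k" using prime_factor_nat by blast
  have "p \<noteq> q"
  proof
    assume "p = q"
    then have "q ^ 2 dvd n" using k p(2) by (auto simp: power2_eq_square)
    then have "q dvd 1" using assms(1) squarefreeD by blast
    then show False using assms(4) by simp
  qed
  then show ?thesis using that p k by simp
qed

lemma not_dvd_if_cong_prime_power:
  fixes n p q i :: nat
  assumes "prime p" and "prime q" and "p \<noteq> q" and "[n = p ^ i] (mod (p ^ (q - 1) - 1))"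
  shows "\<not> q dvd n"
proof
  assume "q dvd n"
  have "\<not> q dvd p" using assms(1-3) primes_dvd_imp_eq by blast
  then have "[p ^ (q - 1) = 1] (mod q)" using fermat_theorem assms(2) by blast
  then have "q dvd p ^ (q - 1) - 1" by (rule cong_to_1_nat)
  then have "[n = p ^ i] (mod q)" using assms(4) cong_dvd_modulus_nat by blast
  then have "q dvd p ^ i" using \<open>q dvd n\<close> cong_dvd_iff by blast
  then show False using \<open>\<not> q dvd p\<close> assms(2) prime_dvd_power_nat by blast
qed

theorem lemma2:
  fixes m n :: nat
  assumes "m > 0" and "n > 1" and "\<not> prime n"
    and "squarefree n"
    and "\<And>p r. prime p \<Longrightarrow> p dvd n \<Longrightarrow> 1 \<le> r \<Longrightarrow> r \<le> m \<Longrightarrow>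
           \<exists>i::nat. [n = p ^ i] (mod (p ^ r - 1))"
  shows "\<forall>r. 1 \<le> r \<and> r \<le> m \<longrightarrow> [n choose r = 0] (mod n)"
proof (intro allI impI)
  fix r assume r: "1 \<le> r \<and> r \<le> m"
  have prime_factor_gt: "q > m" if q: "prime q" "q dvd n" for q
  proof (rule ccontr)
    assume "\<not> q > m"
    moreover have "q \<ge> 2" using q(1) prime_ge_2_nat by blast
    ultimately have "1 \<le> q - 1" and "q - 1 \<le> m" by auto
    obtain p where p: "prime p" "p dvd n" "p \<noteq> q"
      using squarefree_composite_other_prime_factor assms(2-4) q by blast
    obtain i where "[n = p ^ i] (mod (p ^ (q - 1) - 1))"
      using assms(5)[OF p(1,2) \<open>1 \<le> q - 1\<close> \<open>q - 1 \<le> m\<close>] by blast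
    then show False using not_dvd_if_cong_prime_power p q by blast
  qed
  have "q dvd (n choose r)" if q: "prime q" "q dvd n" for q
  proof (rule prime_dvd_choose_if_not_dvd[OF q])
    show "\<not> q dvd r" using prime_factor_gt[OF q] r by (intro nat_dvd_not_less) auto
  qed
  then show "[n choose r = 0] (mod n)"
    using squarefree_dvd_if_prime_factors_dvd assms(4) by (auto simp: cong_0_iff)
qed

end
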